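(* Let $N,K,N_0$ be positive integers with $N=KN_0$. Consider ordered $K$-tuples $(\boldsymbol\zeta_1,\dots,\boldsymbol\zeta_K)$, where each $\boldsymbol\zeta_k=(\boldsymbol\zeta_k[1]<\dots<\boldsymbol\zeta_k[N_0])$ is an increasing vector of elements of $\{1,\dots,N\}$, the sets $\{\boldsymbol\zeta_k[n]\}_n$ are pairwise disjoint, and which satisfy the translation constraint $$\boldsymbol\zeta_k[n]=\boldsymbol\zeta_{k'}[n]+\eta_{k,k'}\quad\text{for all } n\in\{1,\dots,N_0\},\ k\neq k',$$ for some nonzero integer constants $\eta_{k,k'}$. For each $k$ let $\mathrm{var}(\boldsymbol\zeta_k)=\frac1{N_0}\sum_n\boldsymbol\zeta_k[n]^2-\frac1{N_0^2}\big(\sum_n\boldsymbol\zeta_k[n]\big)^2$. Then, among all such tuples, $\min_k \mathrm{var}(\boldsymbol\zeta_k)$ is maximized when $\eta_{k,k'}=k-k'$ for all $k\ne k'$, i.e. by the interleaved distribution $\boldsymbol\zeta_k[n]=k+(n-1)K$.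
   Context: $\boldsymbol\zeta_k$ is the vector of subcarrier indices assigned to user $k$ in an OFDMA system with $N$ subcarriers labeled $1,\dots,N$ and $K$ users, each subcarrier used by at most one user, each user receiving $N_0$ subcarriers. The interleaved distribution assigns to user $k$ the subcarriers $k, k+K, k+2K,\dots,k+(N_0-1)K$. *)

theory Defs
  imports Complex_Main
begin

text \<open>A tuple of subcarrier vectors is modelled as z :: nat => nat => int, where
  z k n is the n-th entry (n in 1..N0) of the vector of user k (k in 1..K).\<close>

definition var_vec :: "nat \<Rightarrow> (nat \<Rightarrow> int) \<Rightarrow> real" where
  "var_vec N0 v =
     (1 / real N0) * (\<Sum>n=1..N0. (real_of_int (v n))^2)
     - (1 / (real N0)^2) * (\<Sum>n=1..N0. real_of_int (v n))^2"

definition admissible :: "nat \<Rightarrow> nat \<Rightarrow> nat \<Rightarrow> (nat \<Rightarrow> nat \<Rightarrow> int) \<Rightarrow> bool" where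
  "admissible N K N0 z \<longleftrightarrow>
     (\<forall>k\<in>{1..K}. \<forall>n\<in>{1..N0}. 1 \<le> z k n \<and> z k n \<le> int N) \<and>
     (\<forall>k\<in>{1..K}. \<forall>n\<in>{1..N0}. \<forall>m\<in>{1..N0}. n < m \<longrightarrow> z k n < z k m) \<and>
     (\<forall>k\<in>{1..K}. \<forall>k'\<in>{1..K}. k \<noteq> k' \<longrightarrow>
        (\<forall>n\<in>{1..N0}. \<forall>m\<in>{1..N0}. z k n \<noteq> z k' m)) \<and>
     (\<forall>k\<in>{1..K}. \<forall>k'\<in>{1..K}. k \<noteq> k' \<longrightarrow>
        (\<exists>\<eta>::int. \<eta> \<noteq> 0 \<and> (\<forall>n\<in>{1..N0}. z k n = z k' n + \<eta>)))"

definition min_var :: "nat \<Rightarrow> nat \<Rightarrow> (nat \<Rightarrow> nat \<Rightarrow> int) \<Rightarrow> real" where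
  "min_var K N0 z = Min ((\<lambda>k. var_vec N0 (z k)) ` {1..K})"

definition interleaved :: "nat \<Rightarrow> nat \<Rightarrow> nat \<Rightarrow> int" where
  "interleaved K k n = int k + (int n - 1) * int K"

end

theory Submission
  imports Defs
begin

text \<open>All vectors of an admissible tuple are translates \<open>a + b\<^sub>k\<close> of one vector \<open>a\<close>, so they
  share its variance, and \<open>(k, n) \<mapsto> b\<^sub>k + a\<^sub>n\<close> is a bijection onto \<open>{1..N}\<close>. Variance is additive
  over such a product decomposition: \<open>(N\<^sup>2 - 1)/12 = var a + var b\<close>. The shifts \<open>b\<^sub>k\<close> are \<open>K\<close> distinct
  integers, hence \<open>var b \<ge> (K\<^sup>2 - 1)/12\<close>, which leaves \<open>var a \<le> K\<^sup>2 (N\<^sub>0\<^sup>2 - 1)/12\<close>; the interleaved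
  vectors \<open>k + (n - 1) K\<close> attain this bound.\<close>

text \<open>\<open>dispersion f A\<close> is \<open>card A\<^sup>2\<close> times the variance of \<open>f\<close> on \<open>A\<close>; it is integer-valued, so the
  whole argument is exact integer arithmetic.\<close>

definition dispersion :: "('a \<Rightarrow> int) \<Rightarrow> 'a set \<Rightarrow> int" where
  "dispersion f A = int (card A) * (\<Sum>x\<in>A. f x ^ 2) - (\<Sum>x\<in>A. f x) ^ 2"

lemma var_vec_eq_dispersion:
  "0 < N0 \<Longrightarrow> var_vec N0 v = real_of_int (dispersion v {1..N0}) / (real N0)^2"
  unfolding var_vec_def dispersion_def by (simp add: field_simps power2_eq_square)

lemma dispersion_cong: "(\<And>x. x \<in> A \<Longrightarrow> f x = g x) \<Longrightarrow> dispersion f A = dispersion g A"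
  unfolding dispersion_def by (simp cong: sum.cong)

lemma dispersion_shift: "dispersion (\<lambda>x. c + f x) A = dispersion f A"
proof -
  have "(\<Sum>x\<in>A. (c + f x) ^ 2) = (\<Sum>x\<in>A. f x ^ 2) + 2 * c * (\<Sum>x\<in>A. f x) + int (card A) * c ^ 2"
    by (simp add: power2_sum sum.distrib flip: sum_distrib_left sum_distrib_right)
  moreover have "(\<Sum>x\<in>A. c + f x) = (\<Sum>x\<in>A. f x) + int (card A) * c"
    by (simp add: sum.distrib)
  ultimately show ?thesis
    unfolding dispersion_def by (simp add: power2_sum algebra_simps power2_eq_square)
qed

lemma dispersion_scale: "dispersion (\<lambda>x. c * f x) A = c ^ 2 * dispersion f A"
  unfolding dispersion_def
  by (simp add: sum_distrib_left[symmetric] algebra_simps)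

lemma dispersion_reindex: "inj_on g A \<Longrightarrow> dispersion f (g ` A) = dispersion (f \<circ> g) A"
  unfolding dispersion_def by (simp add: sum.reindex card_image)

lemma dispersion_insert:
  assumes "finite A" "x \<notin> A"
  shows "dispersion f (insert x A) = dispersion f A + (\<Sum>y\<in>A. (f x - f y) ^ 2)"
proof -
  have "(\<Sum>y\<in>A. (f x - f y) ^ 2)
      = int (card A) * f x ^ 2 - 2 * f x * (\<Sum>y\<in>A. f y) + (\<Sum>y\<in>A. f y ^ 2)"
    by (simp add: power2_diff sum.distrib sum_subtractf sum_distrib_left)
  then show ?thesis
    using assms unfolding dispersion_def by (simp add: algebra_simps power2_eq_square)
qed

lemma dispersion_product_sum:
  "dispersion (\<lambda>(i, j). f i + g j) (A \<times> B)
     = int (card B) ^ 2 * dispersion f A + int (card A) ^ 2 * dispersion g B"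
proof -
  have "(\<Sum>p\<in>A \<times> B. (\<lambda>(i, j). f i + g j) p)
      = int (card B) * (\<Sum>i\<in>A. f i) + int (card A) * (\<Sum>j\<in>B. g j)"
    by (simp add: sum.cartesian_product' sum.distrib sum_distrib_right mult.commute)
  moreover have "(\<Sum>p\<in>A \<times> B. ((\<lambda>(i, j). f i + g j) p) ^ 2)
      = int (card B) * (\<Sum>i\<in>A. f i ^ 2) + 2 * (\<Sum>i\<in>A. f i) * (\<Sum>j\<in>B. g j)
        + int (card A) * (\<Sum>j\<in>B. g j ^ 2)"
    by (simp add: sum.cartesian_product' power2_sum sum.distrib sum_distrib_left
        sum_distrib_right algebra_simps)
  ultimately show ?thesis
    unfolding dispersion_def by (simp add: card_cartesian_product algebra_simps power2_eq_square)
qed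

lemma dispersion_atLeastAtMost: "12 * dispersion int {1..n} = int n ^ 2 * (int n ^ 2 - 1)"
proof -
  have sum_id: "2 * (\<Sum>j=1..n. int j) = int n * (int n + 1)"
    by (induction n) (simp_all add: algebra_simps)
  have sum_sq: "6 * (\<Sum>j=1..n. int j ^ 2) = int n * (int n + 1) * (2 * int n + 1)"
    by (induction n) (simp_all add: algebra_simps power2_eq_square)
  have "12 * dispersion int {1..n}
      = 2 * int n * (6 * (\<Sum>j=1..n. int j ^ 2)) - 3 * (2 * (\<Sum>j=1..n. int j)) ^ 2"
    unfolding dispersion_def by (simp add: algebra_simps power2_eq_square)
  also have "\<dots> = int n ^ 2 * (int n ^ 2 - 1)"
    unfolding sum_id sum_sq by (simp add: algebra_simps power2_eq_square)
  finally show ?thesis .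
qed

lemma sum_power2_pos_int_set_lower_bound:
  fixes S :: "int set"
  assumes "finite S" and "\<forall>s\<in>S. 0 < s"
  shows "int (card S) * (int (card S) + 1) * (2 * int (card S) + 1) \<le> 6 * (\<Sum>s\<in>S. s ^ 2)"
  using assms
proof (induction S rule: finite_linorder_max_induct)
  case empty
  then show ?case by simp
next
  case (insert b A)
  let ?k = "int (card A)"
  have "A \<subseteq> {1..b - 1}"
    using insert.hyps(2) insert.prems by force
  then have "?k \<le> b - 1"
    using card_mono[of "{1..b - 1}" A] insert.prems by auto
  then have "(?k + 1) ^ 2 \<le> b ^ 2"
    by (intro power_mono) auto
  moreover have "?k * (?k + 1) * (2 * ?k + 1) \<le> 6 * (\<Sum>s\<in>A. s ^ 2)"
    using insert by simp
  moreover have "b \<notin> A"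
    using insert.hyps(2) by blast
  ultimately show ?case
    using insert.hyps(1) by (simp add: algebra_simps power2_eq_square)
qed

lemma dispersion_int_set_lower_bound:
  fixes B :: "int set"
  assumes "finite B"
  shows "int (card B) ^ 2 * (int (card B) ^ 2 - 1) \<le> 12 * dispersion (\<lambda>x. x) B"
  using assms
proof (induction B rule: finite_linorder_max_induct)
  case empty
  then show ?case by (simp add: dispersion_def)
next
  case (insert b A)
  let ?k = "int (card A)"
  have "b \<notin> A"
    using insert.hyps(2) by blast
  have inj: "inj_on (\<lambda>y. b - y) A"
    by (simp add: inj_on_def)
  have "?k * (?k + 1) * (2 * ?k + 1) \<le> 6 * (\<Sum>y\<in>A. (b - y) ^ 2)"
    using sum_power2_pos_int_set_lower_bound[of "(\<lambda>y. b - y) ` A"] insert.hyps inj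
    by (simp add: sum.reindex card_image)
  then show ?case
    using insert.IH insert.hyps(1) \<open>b \<notin> A\<close> dispersion_insert[OF insert.hyps(1) \<open>b \<notin> A\<close>, of "\<lambda>x. x"]
    by (simp add: algebra_simps power2_eq_square)
qed

lemma dispersion_le_of_tiling:
  fixes a :: "'b \<Rightarrow> int" and b :: "'a \<Rightarrow> int"
  assumes "finite I" "finite J" "I \<noteq> {}" "J \<noteq> {}"
    and tiling: "bij_betw (\<lambda>(i, j). b i + a j) (I \<times> J) {1..int (card I * card J)}"
  shows "12 * dispersion a J \<le> int (card I) ^ 2 * int (card J) ^ 2 * (int (card J) ^ 2 - 1)"
proof -
  let ?K = "int (card I)" and ?M = "int (card J)" and ?N = "card I * card J"
  obtain j0 where "j0 \<in> J"
    using assms(4) by blast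
  have inj: "inj_on (\<lambda>(i, j). b i + a j) (I \<times> J)"
    using tiling by (rule bij_betw_imp_inj_on)
  have "inj_on b I"
  proof (rule inj_onI)
    fix i i' assume "i \<in> I" "i' \<in> I" "b i = b i'"
    then show "i = i'"
      using inj_onD[OF inj, of "(i, j0)" "(i', j0)"] \<open>j0 \<in> J\<close> by simp
  qed
  then have spread: "?K ^ 2 * (?K ^ 2 - 1) \<le> 12 * dispersion b I"
    using dispersion_int_set_lower_bound[of "b ` I"] assms(1)
    by (simp add: dispersion_reindex card_image comp_def)
  have total: "12 * dispersion (\<lambda>x. x) {1..int ?N} = int ?N ^ 2 * (int ?N ^ 2 - 1)"
    using dispersion_reindex[of int "{1..?N}" "\<lambda>x. x"] dispersion_atLeastAtMost[of ?N]
    by (simp add: image_int_atLeastAtMost comp_def)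
  have "dispersion (\<lambda>x. x) {1..int ?N} = ?M ^ 2 * dispersion b I + ?K ^ 2 * dispersion a J"
    using dispersion_reindex[OF inj, of "\<lambda>x. x"] bij_betw_imp_surj_on[OF tiling]
    by (simp add: comp_def dispersion_product_sum)
  moreover have "?M ^ 2 * (?K ^ 2 * (?K ^ 2 - 1)) \<le> ?M ^ 2 * (12 * dispersion b I)"
    using spread by (intro mult_left_mono) auto
  ultimately have "?K ^ 2 * (12 * dispersion a J) \<le> ?K ^ 2 * (?K ^ 2 * ?M ^ 2 * (?M ^ 2 - 1))"
    using total by (simp add: algebra_simps power2_eq_square)
  then show ?thesis
    by (rule mult_left_le_imp_le) (use assms(1,3) in simp)
qed

lemma min_var_const:
  assumes "0 < K" and "\<And>k. k \<in> {1..K} \<Longrightarrow> var_vec N0 (z k) = c"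
  shows "min_var K N0 z = c"
proof -
  have "(\<lambda>k. var_vec N0 (z k)) ` {1..K} = {c}"
    using assms by force
  then show ?thesis
    by (simp add: min_var_def)
qed

lemma admissible_translate:
  assumes "admissible N K N0 z" "k \<in> {1..K}" "n \<in> {1..N0}"
  shows "z k n = (z k 1 - z 1 1) + z 1 n"
proof (cases "k = 1")
  case False
  have "1 \<in> {1..K}" "1 \<in> {1..N0}"
    using assms(2,3) by auto
  then obtain \<eta> where "\<forall>n\<in>{1..N0}. z k n = z 1 n + \<eta>"
    using assms False unfolding admissible_def by blast
  then show ?thesis
    using assms(3) \<open>1 \<in> {1..N0}\<close> by simp
qed simp

lemma admissible_tiling:
  assumes adm: "admissible N K N0 z" and "N = K * N0"
  shows "bij_betw (\<lambda>(k, n). z k n) ({1..K} \<times> {1..N0}) {1..int N}"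
proof -
  have mono: "z k n < z k m" if "k \<in> {1..K}" "n \<in> {1..N0}" "m \<in> {1..N0}" "n < m" for k n m
    using adm that unfolding admissible_def by blast
  have disjoint: "z k n \<noteq> z k' m"
    if "k \<in> {1..K}" "k' \<in> {1..K}" "k \<noteq> k'" "n \<in> {1..N0}" "m \<in> {1..N0}" for k k' n m
    using adm that unfolding admissible_def by blast
  have "inj_on (\<lambda>(k, n). z k n) ({1..K} \<times> {1..N0})"
  proof (rule inj_onI, clarify)
    fix k n k' m
    assume "k \<in> {1..K}" "n \<in> {1..N0}" "k' \<in> {1..K}" "m \<in> {1..N0}" and eq: "z k n = z k' m"
    then have "k = k'"
      using disjoint by blast
    moreover have "n = m"
      using mono[of k n m] mono[of k m n] \<open>k = k'\<close> eq \<open>k \<in> {1..K}\<close> \<open>n \<in> {1..N0}\<close> \<open>m \<in> {1..N0}\<close>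
      by (cases n m rule: linorder_cases) auto
    ultimately show "k = k' \<and> n = m" ..
  qed
  moreover have "(\<lambda>(k, n). z k n) ` ({1..K} \<times> {1..N0}) \<subseteq> {1..int N}"
    using adm unfolding admissible_def by auto
  moreover have "card ({1..K} \<times> {1..N0}) = card {1..int N}"
    using assms(2) by (simp add: card_cartesian_product del: of_nat_mult)
  ultimately show ?thesis
    unfolding bij_betw_def by (simp add: card_subset_eq card_image)
qed

lemma admissible_min_var_le:
  assumes adm: "admissible N K N0 z" and "0 < K" "0 < N0" "N = K * N0"
  shows "min_var K N0 z \<le> (real K)^2 * ((real N0)^2 - 1) / 12"
proof -
  have same_dispersion: "dispersion (z k) {1..N0} = dispersion (z 1) {1..N0}" if "k \<in> {1..K}" for k
  proof -
    have "dispersion (z k) {1..N0} = dispersion (\<lambda>n. (z k 1 - z 1 1) + z 1 n) {1..N0}"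
      using admissible_translate[OF adm that] by (rule dispersion_cong)
    also have "\<dots> = dispersion (z 1) {1..N0}"
      by (rule dispersion_shift)
    finally show ?thesis .
  qed
  have "var_vec N0 (z k) = var_vec N0 (z 1)" if "k \<in> {1..K}" for k
    unfolding var_vec_eq_dispersion[OF \<open>0 < N0\<close>] same_dispersion[OF that] ..
  then have "min_var K N0 z = var_vec N0 (z 1)"
    by (rule min_var_const[OF \<open>0 < K\<close>])
  have tiling: "bij_betw (\<lambda>(k, n). (z k 1 - z 1 1) + z 1 n) ({1..K} \<times> {1..N0}) {1..int N}"
  proof (rule iffD1[OF bij_betw_cong admissible_tiling[OF adm \<open>N = K * N0\<close>]])
    fix p assume "p \<in> {1..K} \<times> {1..N0}"
    then obtain k n where "p = (k, n)" "k \<in> {1..K}" "n \<in> {1..N0}"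
      by blast
    then show "(\<lambda>(k, n). z k n) p = (\<lambda>(k, n). (z k 1 - z 1 1) + z 1 n) p"
      using admissible_translate[OF adm \<open>k \<in> {1..K}\<close> \<open>n \<in> {1..N0}\<close>] by simp
  qed
  have "12 * dispersion (z 1) {1..N0} \<le> int K ^ 2 * int N0 ^ 2 * (int N0 ^ 2 - 1)"
    using dispersion_le_of_tiling[where I = "{1..K}" and J = "{1..N0}"] tiling assms(2,3,4)
    by simp
  then have "real_of_int (12 * dispersion (z 1) {1..N0})
      \<le> real_of_int (int K ^ 2 * int N0 ^ 2 * (int N0 ^ 2 - 1))"
    by (simp only: of_int_le_iff)
  then have "real_of_int (dispersion (z 1) {1..N0})
      \<le> (real K)^2 * ((real N0)^2 - 1) / 12 * (real N0)^2"
    by (simp add: field_simps)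
  then show ?thesis
    using \<open>min_var K N0 z = var_vec N0 (z 1)\<close> \<open>0 < N0\<close>
    by (simp add: var_vec_eq_dispersion pos_divide_le_eq)
qed

lemma interleaved_residue:
  assumes "k \<in> {1..K}"
  shows "(interleaved K k n - 1) mod int K = int k - 1"
proof -
  have "(interleaved K k n - 1) mod int K = ((int k - 1) + (int n - 1) * int K) mod int K"
    by (simp add: interleaved_def algebra_simps)
  also have "\<dots> = (int k - 1) mod int K"
    by (rule mod_mult_self1)
  also have "\<dots> = int k - 1"
    using assms by (intro mod_pos_pos_trivial) auto
  finally show ?thesis .
qed

lemma interleaved_admissible:
  assumes "N = K * N0"
  shows "admissible N K N0 (interleaved K)"
  unfolding admissible_def
proof (intro conjI ballI impI allI)
  fix k n assume "k \<in> {1..K}" "n \<in> {1..N0}"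
  then have "1 \<le> int k" "int k \<le> int K"
    and "0 \<le> (int n - 1) * int K" "(int n - 1) * int K \<le> (int N0 - 1) * int K"
    by (auto intro: mult_right_mono)
  moreover have "int N = int K + (int N0 - 1) * int K"
    using assms by (simp add: algebra_simps)
  ultimately show "1 \<le> interleaved K k n" "interleaved K k n \<le> int N"
    unfolding interleaved_def by linarith+
next
  fix k n m :: nat assume "k \<in> {1..K}" "n < m"
  then show "interleaved K k n < interleaved K k m"
    by (simp add: interleaved_def algebra_simps)
next
  fix k k' n m :: nat assume "k \<in> {1..K}" "k' \<in> {1..K}" "k \<noteq> k'"
  then show "interleaved K k n \<noteq> interleaved K k' m"
    using interleaved_residue[of k K n] interleaved_residue[of k' K m] by auto
next
  fix k k' :: nat assume "k \<noteq> k'"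
  then show "\<exists>\<eta>::int. \<eta> \<noteq> 0 \<and> (\<forall>n\<in>{1..N0}. interleaved K k n = interleaved K k' n + \<eta>)"
    by (intro exI[of _ "int k - int k'"]) (simp add: interleaved_def)
qed

lemma var_vec_interleaved:
  assumes "0 < N0"
  shows "var_vec N0 (interleaved K k) = (real K)^2 * ((real N0)^2 - 1) / 12"
proof -
  have "interleaved K k = (\<lambda>n. (int k - int K) + int K * int n)"
    by (simp add: fun_eq_iff interleaved_def algebra_simps)
  then have "12 * dispersion (interleaved K k) {1..N0} = int K ^ 2 * (int N0 ^ 2 * (int N0 ^ 2 - 1))"
    using dispersion_atLeastAtMost[of N0]
    by (simp add: dispersion_shift dispersion_scale[of "int K" int])
  then have "real_of_int (12 * dispersion (interleaved K k) {1..N0})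
      = real_of_int (int K ^ 2 * (int N0 ^ 2 * (int N0 ^ 2 - 1)))"
    by (simp only:)
  then have "real_of_int (dispersion (interleaved K k) {1..N0})
      = (real K)^2 * ((real N0)^2 - 1) / 12 * (real N0)^2"
    by (simp add: field_simps)
  then show ?thesis
    using assms by (simp add: var_vec_eq_dispersion)
qed

theorem proposition5:
  fixes N K N0 :: nat
  assumes "0 < N" and "0 < K" and "0 < N0" and "N = K * N0"
  shows "admissible N K N0 (interleaved K)
         \<and> (\<forall>z. admissible N K N0 z \<longrightarrow> min_var K N0 z \<le> min_var K N0 (interleaved K))"
proof -
  have optimum: "min_var K N0 (interleaved K) = (real K)^2 * ((real N0)^2 - 1) / 12"
    using var_vec_interleaved[OF \<open>0 < N0\<close>] by (rule min_var_const[OF \<open>0 < K\<close>])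
  show ?thesis
    unfolding optimum
    using interleaved_admissible[OF \<open>N = K * N0\<close>]
      admissible_min_var_le[OF _ \<open>0 < K\<close> \<open>0 < N0\<close> \<open>N = K * N0\<close>]
    by blast
qed

end
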